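(* Under the assumption $\mathrm{rank}(D_{\mathrm{ac}})<n$ (the adversary does not have access to all the communication channels between the two side filters), the residual signal $res_{\mathrm{AA}}(t)=y_{\mathrm{p}}(t)-C\hat{x}^{\mathrm{AA}}(t)$ is affected by the actuator cyber attack $a_{\mathrm{u}}(t)$ and is decoupled from $a_{\mathrm{y}}(t)$, $f_1(t)$ and $f_2(t)$ (i.e. its trajectory is not affected by these signals), if the following conditions hold for $\ell=\mathrm{AA}$: 1) $T^{\ell}=I-H^{\ell}C$; 2) $(I-H^{\ell}C)F_1=0$; 3) $(I-H^{\ell}C)F_2=0$; 4) $L^{\ell}D_{\mathrm{ac}}=0$; 5) $L_{\mathrm{p}}^{\ell}D_{\mathrm{ac}}=0$; 6) $K_{\mathrm{p}}^{\mathrm{AA}}D_{\mathrm{a}}=0$; 7) the triplet $(C,F^{\ell},L^{\ell})$ is left-invertible; 8) the Rosenbrock system matrix $$P_{\Sigma_{\mathrm{u}}}(s)=\begin{bmatrix} sI-(F_{\mathrm{p}}^{\mathrm{AA}}+L_{\mathrm{p}}^{\mathrm{AA}}) & -T_{\mathrm{p}}^{\mathrm{AA}}B_{\mathrm{a}}\\ L^{\mathrm{AA}} & 0_{(n+p_{\mathrm{f}}+p)\times m_{\mathrm{a}}}\end{bmatrix}$$ does not have any non-minimum phase zero dynamics; 9) $\mathrm{rank}(L^{\mathrm{AA}}T_{\mathrm{p}}^{\mathrm{AA}}B_{\mathrm{a}})=\mathrm{rank}(T_{\mathrm{p}}^{\mathrm{AA}}B_{\mathrm{a}})$; 10) $\check{F}^{\ell}=\begin{bmatrix}F^{\ell}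 & -L^{\ell}\\ 0 & F_{\mathrm{p}}^{\ell}+L_{\mathrm{p}}^{\ell}\end{bmatrix}$ is Hurwitz.
   Context: Consider the augmented LTI cyber-physical system $\dot{x}(t)=Ax(t)+Bu(t)+B_{\mathrm{a}}a_{\mathrm{u}}(t)+F_1f_1(t)+F_2f_2(t)+N\omega(t)$, with $x(t)\in\mathbb{R}^{n+p_{\mathrm{f}}+p}$ (plant state of dimension $n$ augmented with a pseudo-actuator-fault subsystem representing sensor faults and noise), where $u(t)$ is the control command, $a_{\mathrm{u}}(t)\in\mathbb{R}^{m_{\mathrm{a}}}$ an actuator cyber attack, $f_1(t)$ an actuator fault, $f_2(t)$ a pseudo actuator fault (representing sensor faults), $\omega(t)$ noise. The plant-side measured output is $y_{\mathrm{p}}(t)=Cx(t)$ and the command-and-control (C\&C) side output is $y^*(t)=Cx(t)+D_{\mathrm{a}}a_{\mathrm{y}}(t)$ with $a_{\mathrm{y}}(t)\in\mathbb{R}^{p_{\mathrm{a}}}$ a sensor cyber attack; on the plant side the manipulated input satisfies $Bu^*(t)=Bu(t)+B_{\mathrm{a}}a_{\mathrm{u}}(t)$. For an index $\ell$, a C\&C side filter $\dot{z}_{\mathrm{c}}^{\ell}=F_{\mathrm{p}}^{\ell}z_{\mathrm{c}}^{\ell}+T_{\mathrm{p}}^{\ell}Bu+K_{\mathrm{p}}^{\ell}y^*$ and a plant side filter $\dot{z}_{\mathrm{p}}^{\ell}=F_{\mathrm{p}}^{\ell}z_{\mathrm{p}}^{\ell}+T_{\mathrm{p}}^{\ell}Bu^*+K_{\mathrm{p}}^{\ell}y_{\mathrm{p}}+L_{\mathrm{p}}^{\ell}(z_{\mathrm{p}}^{\ell}-(z_{\mathrm{c}}^{\ell}+D_{\mathrm{ac}}a_{\mathrm{c}}))$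 are used, where $a_{\mathrm{c}}(t)$ is a cyber attack on the communication link carrying $z_{\mathrm{c}}^{\ell}$ to the plant side, with signature $D_{\mathrm{ac}}$. A plant-side unknown-input-observer detector is $\dot{z}^{\ell}=F^{\ell}z^{\ell}+T^{\ell}Bu^*+K^{\ell}y_{\mathrm{p}}+L^{\ell}(z_{\mathrm{p}}^{\ell}-(z_{\mathrm{c}}^{\ell}+D_{\mathrm{ac}}a_{\mathrm{c}}))$, $\hat{x}^{\ell}=z^{\ell}+H^{\ell}y_{\mathrm{p}}$, with $K^{\ell}=K_1^{\ell}+K_2^{\ell}$, $F^{\ell}=A-H^{\ell}CA-K_1^{\ell}C$, $K_2^{\ell}=F^{\ell}H^{\ell}$. The error $e^{\ell}=x-\hat{x}^{\ell}$ and filter discrepancy $e_{\mathrm{p}}^{\ell}=z_{\mathrm{p}}^{\ell}-z_{\mathrm{c}}^{\ell}$ form the augmented error $\check{e}^{\ell}=[e^{\ell\top},e_{\mathrm{p}}^{\ell\top}]^\top$ whose state matrix is $\check{F}^{\ell}$. The residual is $res_{\ell}(t)=y_{\mathrm{p}}(t)-C\hat{x}^{\ell}(t)=Ce^{\ell}(t)$. The adversary knows all filter and detector parameters. The index $\mathrm{AA}$ denotes the filters/detector designed for actuator attack detection. *)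

theory Defs
  imports "HOL-Analysis.Analysis"
begin

definition cmat :: "real^'n^'m \<Rightarrow> complex^'n^'m" where
  "cmat M = (\<chi> i j. complex_of_real (M $ i $ j))"

definition blk :: "'a^'c1^'r1 \<Rightarrow> 'a^'c2^'r1 \<Rightarrow> 'a^'c1^'r2 \<Rightarrow> 'a^'c2^'r2
                    \<Rightarrow> 'a^('c1 + 'c2)^('r1 + 'r2)" where
  "blk P Q R S = (\<chi> i j. (case i of
       Inl i' \<Rightarrow> (case j of Inl j' \<Rightarrow> P $ i' $ j' | Inr j' \<Rightarrow> Q $ i' $ j')
     | Inr i' \<Rightarrow> (case j of Inl j' \<Rightarrow> R $ i' $ j' | Inr j' \<Rightarrow> S $ i' $ j')))"

definition normal_rank :: "(complex \<Rightarrow> complex^'n^'m) \<Rightarrow> nat" where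
  "normal_rank P = Max (range (\<lambda>s. rank (P s)))"

definition invariant_zero :: "(complex \<Rightarrow> complex^'n^'m) \<Rightarrow> complex \<Rightarrow> bool" where
  "invariant_zero P s \<longleftrightarrow> rank (P s) < normal_rank P"

(* No non-minimum-phase zero dynamics: no invariant zero in the closed right half plane *)
definition minimum_phase :: "(complex \<Rightarrow> complex^'n^'m) \<Rightarrow> bool" where
  "minimum_phase P \<longleftrightarrow> (\<forall>s. invariant_zero P s \<longrightarrow> Re s < 0)"

(* Triplet (C, Fs, G) is left-invertible: its Rosenbrock matrix has full column normal rank *)
definition left_invertible :: "real^'x^'y \<Rightarrow> real^'x^'x \<Rightarrow> real^'v^'x \<Rightarrow> bool" where
  "left_invertible C Fs G \<longleftrightarrow>
     normal_rank (\<lambda>s. blk (mat s - cmat Fs) (- cmat G) (cmat C) (0 :: complex^'v^'y))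
       = CARD('x) + CARD('v)"

definition hurwitz :: "real^'n^'n \<Rightarrow> bool" where
  "hurwitz M \<longleftrightarrow> (\<forall>s::complex. 0 \<le> Re s \<longrightarrow> det (mat s - cmat M) \<noteq> 0)"

(* Trajectories (on t >= 0) of the closed loop: plant, C&C filter, plant filter, UIO detector *)
definition cps_traj ::
  "real^'x^'x \<Rightarrow> real^'u^'x \<Rightarrow> real^'m^'x \<Rightarrow> real^'f^'x \<Rightarrow> real^'g^'x \<Rightarrow> real^'w^'x
   \<Rightarrow> real^'x^'y \<Rightarrow> real^'a^'y \<Rightarrow> real^'r^'q
   \<Rightarrow> real^'q^'q \<Rightarrow> real^'x^'q \<Rightarrow> real^'y^'q \<Rightarrow> real^'q^'q
   \<Rightarrow> real^'x^'x \<Rightarrow> real^'x^'x \<Rightarrow> real^'y^'x \<Rightarrow> real^'q^'x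
   \<Rightarrow> (real \<Rightarrow> real^'x) \<Rightarrow> (real \<Rightarrow> real^'u) \<Rightarrow> (real \<Rightarrow> real^'u) \<Rightarrow> (real \<Rightarrow> real^'m)
   \<Rightarrow> (real \<Rightarrow> real^'f) \<Rightarrow> (real \<Rightarrow> real^'g) \<Rightarrow> (real \<Rightarrow> real^'w)
   \<Rightarrow> (real \<Rightarrow> real^'a) \<Rightarrow> (real \<Rightarrow> real^'r)
   \<Rightarrow> (real \<Rightarrow> real^'q) \<Rightarrow> (real \<Rightarrow> real^'q) \<Rightarrow> (real \<Rightarrow> real^'x) \<Rightarrow> bool" where
  "cps_traj A B Ba F1 F2 N C Da Dac Fp Tp Kp Lp F T K L x u ustar au f1 f2 w ay ac zc zp z \<longleftrightarrow>
    (\<forall>t\<ge>0.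
      (x has_vector_derivative
         (A *v x t + B *v u t + Ba *v au t + F1 *v f1 t + F2 *v f2 t + N *v w t)) (at t within {0..})
    \<and> B *v ustar t = B *v u t + Ba *v au t
    \<and> (zc has_vector_derivative
         (Fp *v zc t + Tp *v (B *v u t) + Kp *v (C *v x t + Da *v ay t))) (at t within {0..})
    \<and> (zp has_vector_derivative
         (Fp *v zp t + Tp *v (B *v ustar t) + Kp *v (C *v x t)
          + Lp *v (zp t - (zc t + Dac *v ac t)))) (at t within {0..})
    \<and> (z has_vector_derivative
         (F *v z t + T *v (B *v ustar t) + K *v (C *v x t)
          + L *v (zp t - (zc t + Dac *v ac t)))) (at t within {0..}))"

(* residual res(t) = y_p(t) - C xhat(t), with xhat = z + H y_p, y_p = C x *)
definition residual :: "real^'x^'y \<Rightarrow> real^'y^'x \<Rightarrow> (real \<Rightarrow> real^'x) \<Rightarrow> (real \<Rightarrow> real^'x)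
                        \<Rightarrow> real \<Rightarrow> real^'y" where
  "residual C H x z t = C *v x t - C *v (z t + H *v (C *v x t))"

end

theory Submission
  imports Defs
begin

(*
  Conditions 1)-6) make the estimation error e = x - xhat and the filter discrepancy
  e_p = z_p - z_c obey

    e' = F e - L e_p + (I - H C) N w,        e_p' = (F_p + L_p) e_p + T_p B_a a_u,

  in which f_1, f_2, a_y and a_c no longer occur.  For two runs with the same u, a_u, w, a_c
  and initial state, the difference of the pairs (e, e_p) solves a homogeneous linear equation
  from 0, so it vanishes by Gronwall's argument, and so does the difference of the residuals C e.

  If instead C e vanishes identically, with e(0) = 0 and w = 0, then the span Z of the
  trajectory (e, e_p) satisfies C v = 0 and F v - L u : fst ` Z for all (v, u) : Z.  Left
  invertibility of (C, F, L) forces fst to be injective on Z: otherwise dim (fst ` Z) < dim Z,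
  and for every s a dimension count yields a complex kernel vector of the Rosenbrock matrix,
  so its normal rank would drop.  Hence |e_p| <= c |e|, Gronwall gives e = 0, so e_p = 0 and
  the equation for e_p leaves T_p B_a a_u = 0.
*)

section \<open>Curves on the half-line\<close>

lemma gronwall_vanishing:
  fixes d :: "real \<Rightarrow> 'a::real_inner"
  assumes der: "\<And>t. t \<ge> 0 \<Longrightarrow> (d has_vector_derivative d' t) (at t within {0..})"
    and bound: "\<And>t. t \<ge> 0 \<Longrightarrow> norm (d' t) \<le> K * norm (d t)"
    and d0: "d 0 = 0"
    and t: "t \<ge> 0"
  shows "d t = 0"
proof -
  \<comment> \<open>the weighted energy \<open>g\<close> is non-increasing and starts at \<open>0\<close>\<close>
  define g where "g s = exp (- (2*K) * s) * (d s \<bullet> d s)" for s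
  define g' where "g' s = exp (- (2*K) * s) * (2 * (d s \<bullet> d' s) - 2*K * (d s \<bullet> d s))" for s
  have g_deriv: "(g has_vector_derivative g' s) (at s within {0..t})" if "s \<in> {0..t}" for s
  proof -
    have ds: "(d has_derivative (\<lambda>h. h *\<^sub>R d' s)) (at s within {0..t})"
      using der[of s] that has_vector_derivative_within_subset[of d "d' s" s "{0..}" "{0..t}"]
      by (auto simp: has_vector_derivative_def)
    have "((\<lambda>s. d s \<bullet> d s) has_derivative (\<lambda>h. h * (2 * (d s \<bullet> d' s)))) (at s within {0..t})"
      using has_derivative_inner[OF ds ds] by (simp add: algebra_simps inner_commute)
    then have "((\<lambda>s. d s \<bullet> d s) has_real_derivative 2 * (d s \<bullet> d' s)) (at s within {0..t})"
      unfolding has_field_derivative_def by (metis mult_commute_abs)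
    then show ?thesis
      unfolding g_def g'_def has_real_derivative_iff_has_vector_derivative[symmetric]
      by (auto intro!: derivative_eq_intros simp: algebra_simps)
  qed
  have g'_nonpos: "g' s \<le> 0" if "s \<in> {0..t}" for s
  proof -
    have "d s \<bullet> d' s \<le> norm (d s) * norm (d' s)" by (rule norm_cauchy_schwarz)
    also have "\<dots> \<le> norm (d s) * (K * norm (d s))"
      using bound[of s] that by (auto intro: mult_left_mono)
    also have "\<dots> = K * (d s \<bullet> d s)" by (simp add: power2_norm_eq_inner[symmetric] power2_eq_square)
    finally show ?thesis unfolding g'_def by (simp add: mult_nonneg_nonpos)
  qed
  have "g t - g 0 \<le> 0"
    using has_integral_le[OF fundamental_theorem_of_calculus[OF t g_deriv] has_integral_0] g'_nonpos
    by auto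
  then have "d t \<bullet> d t \<le> 0" using d0 unfolding g_def by (simp add: mult_le_0_iff)
  then show ?thesis by (metis inner_eq_zero_iff inner_ge_zero order_antisym)
qed

lemma at_within_Ici_neq_bot:
  fixes t :: real assumes "t \<ge> 0" shows "at t within {0..} \<noteq> bot"
proof -
  have "at t within {t..t+1} \<noteq> bot" by (simp add: at_within_Icc_at_right)
  moreover have "at t within {t..t+1} \<le> at t within {0..}"
    using assms by (intro at_le) auto
  ultimately show ?thesis by (metis bot.extremum_uniqueI)
qed

lemma has_vector_derivative_eq_0_if_vanishing:
  fixes f :: "real \<Rightarrow> 'a::real_normed_vector"
  assumes t: "t \<ge> 0" and vanish: "\<And>s. s \<ge> 0 \<Longrightarrow> f s = 0"
    and der: "(f has_vector_derivative D) (at t within {0..})"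
  shows "D = 0"
proof -
  have "((\<lambda>s. 0) has_vector_derivative D) (at t within {0..})"
    by (rule has_vector_derivative_transform[OF _ _ der]) (use t vanish in auto)
  then show ?thesis
    using vector_derivative_unique_within[OF at_within_Ici_neq_bot[OF t] _ has_vector_derivative_const]
    by blast
qed

lemma has_vector_derivative_in_span_image:
  fixes e :: "real \<Rightarrow> 'a::euclidean_space"
  assumes t: "t \<ge> 0" and der: "(e has_vector_derivative e') (at t within {0..})"
  shows "e' \<in> span (e ` {0..})"
proof -
  \<comment> \<open>the component of \<open>e'\<close> orthogonal to the span is the derivative of a function vanishing on \<open>[0,\<infinity>)\<close>\<close>
  obtain y z where y: "y \<in> span (e ` {0..})" and z: "\<And>w. w \<in> span (e ` {0..}) \<Longrightarrow> orthogonal z w"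
    and e': "e' = y + z"
    using orthogonal_subspace_decomp_exists by metis
  have "z \<bullet> e' = 0"
  proof (rule has_vector_derivative_eq_0_if_vanishing[OF t])
    show "z \<bullet> e s = 0" if "s \<ge> 0" for s
      using z[of "e s"] that by (auto simp: orthogonal_def intro: span_base)
    show "((\<lambda>s. z \<bullet> e s) has_vector_derivative z \<bullet> e') (at t within {0..})"
      using bounded_linear.has_vector_derivative[OF bounded_linear_inner_right der] .
  qed
  moreover have "z \<bullet> y = 0" using z[OF y] by (simp add: orthogonal_def)
  ultimately have "z = 0" using e' by (simp add: inner_add_right)
  then show ?thesis using y e' by simp
qed

section \<open>Linear algebra\<close>

lemma dim_image_less_if_kernel:
  fixes f :: "'a::euclidean_space \<Rightarrow> 'b::euclidean_space"
  assumes f: "linear f" and S: "subspace S" and z: "z \<in> S" "z \<noteq> 0" "f z = 0"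
  shows "dim (f ` S) < dim S"
proof -
  have "{z} \<subseteq> S" "independent {z}" using z by auto
  then obtain B where B: "z \<in> B" "B \<subseteq> S" "independent B" "S \<subseteq> span B"
    using maximal_independent_subset_extend by (metis insert_subset)
  have fin: "finite B" using B(3) by (rule finiteI_independent)
  have "f ` S \<subseteq> span (f ` (B - {z}))"
  proof
    fix y assume "y \<in> f ` S"
    then have "y \<in> span (f ` B)"
      using B(4) span_linear_image[OF f, of B] by auto
    also have "f ` B = insert 0 (f ` (B - {z}))" using B(1) z(3) by auto
    finally show "y \<in> span (f ` (B - {z}))" by simp
  qed
  then have "dim (f ` S) \<le> card (f ` (B - {z}))"
    by (rule dim_le_card) (use fin in auto)
  also have "\<dots> \<le> card (B - {z})" by (rule card_image_le) (use fin in auto)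
  also have "\<dots> < card B" using fin B(1) by (rule card_Diff1_less)
  also have "\<dots> = dim S" using basis_card_eq_dim[OF B(2) B(4) B(3)] .
  finally show ?thesis .
qed

lemma linear_kernel_nontrivial_if_dim_less:
  fixes f :: "'a::euclidean_space \<Rightarrow> 'b::euclidean_space"
  assumes f: "linear f" and S: "subspace S" and image: "f ` S \<subseteq> T" and dim: "dim T < dim S"
  obtains x where "x \<in> S" "x \<noteq> 0" "f x = 0"
proof -
  have "\<not> inj_on f S"
  proof
    assume "inj_on f S"
    then have "dim (f ` S) = dim S"
      using dim_image_eq[OF f, of S] by (simp add: span_eq_iff[THEN iffD2, OF S])
    moreover have "dim (f ` S) \<le> dim T" using image by (rule dim_subset)
    ultimately show False using dim by simp
  qed
  then show ?thesis using that linear_inj_on_iff_eq_0[OF f S] by blast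
qed

lemma rank_less_ncols_if_kernel:
  fixes A :: "'a::field^'n^'m"
  assumes "x \<noteq> 0" "A *v x = 0"
  shows "rank A < CARD('n)"
proof -
  have "\<not> (\<exists>B::'a^'m^'n. B ** A = mat 1)" using assms matrix_left_invertible_ker by blast
  then have "vec.span (rows A) \<noteq> UNIV" using matrix_left_invertible_span_rows_gen by metis
  then have "rank A \<noteq> CARD('n)"
    by (simp add: row_rank_def_gen vec.dim_eq_full[symmetric] card_cart_basis vec.dimension_def)
  then show ?thesis using dim_subset_UNIV_cart_gen[of "rows A"] by (simp add: row_rank_def_gen)
qed

section \<open>Rosenbrock matrices and left invertibility\<close>

lemma normal_rank_less_if_rank_less:
  assumes "\<And>s. rank (P s) < k"
  shows "normal_rank P < k"
  unfolding normal_rank_def using assms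
  by (subst Max_less_iff) (auto intro: finite_subset[of _ "{..<k}"])

definition cvec :: "real^'n \<Rightarrow> real^'n \<Rightarrow> complex^'n" where
  "cvec p q = (\<chi> j. Complex (p $ j) (q $ j))"

definition vec_join :: "'a^'m \<Rightarrow> 'a^'n \<Rightarrow> 'a^('m + 'n)" where
  "vec_join v w = (\<chi> j. case j of Inl a \<Rightarrow> v $ a | Inr b \<Rightarrow> w $ b)"

lemma cvec_eq_0_iff [simp]: "cvec p q = 0 \<longleftrightarrow> p = 0 \<and> q = 0"
  by (auto simp: cvec_def vec_eq_iff complex_eq_iff)

lemma vec_join_eq_0_iff [simp]: "vec_join v w = 0 \<longleftrightarrow> v = 0 \<and> w = 0"
  by (auto simp: vec_join_def vec_eq_iff split: sum.split)

lemma blk_mult_vec_join: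
  "blk P Q R S *v vec_join v w = vec_join (P *v v + Q *v w) (R *v v + S *v w)"
  by (simp add: vec_eq_iff matrix_vector_mult_def blk_def vec_join_def sum.Plus
      flip: UNIV_Plus_UNIV split: sum.split)

lemma cmat_mult_cvec: "cmat M *v cvec p q = cvec (M *v p) (M *v q)"
  by (simp add: vec_eq_iff matrix_vector_mult_def cmat_def cvec_def complex_eq_iff Re_sum Im_sum)

lemma mat_mult_cvec: "mat s *v cvec p q = cvec (Re s *\<^sub>R p - Im s *\<^sub>R q) (Im s *\<^sub>R p + Re s *\<^sub>R q)"
proof -
  have scale: "mat s *v v = (\<chi> i. s * v $ i)" for v :: "complex^'n"
  proof -
    have "(if i = j then s else 0) * v $ j = (if i = j then s * v $ j else 0)" for i j
      by simp
    then show ?thesis by (simp add: vec_eq_iff matrix_vector_mult_def mat_def)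
  qed
  show ?thesis unfolding scale by (simp add: cvec_def vec_eq_iff complex_eq_iff)
qed

lemma matrix_vector_mult_uminus:
  fixes A :: "'a::comm_ring_1^'n^'m"
  shows "(- A) *v x = - (A *v x)" and "A *v (- x) = - (A *v x)"
  by (simp_all add: vec_eq_iff matrix_vector_mult_def sum_negf)

lemma rosenbrock_rank_less_if_real_kernel:
  fixes C :: "real^'x^'y" and F :: "real^'x^'x" and L :: "real^'q^'x"
  assumes "C *v v1 = 0" "C *v v2 = 0"
    and "F *v v1 - L *v u1 = Re s *\<^sub>R v1 - Im s *\<^sub>R v2"
    and "F *v v2 - L *v u2 = Im s *\<^sub>R v1 + Re s *\<^sub>R v2"
    and "(v1, v2, u1, u2) \<noteq> 0"
  shows "rank (blk (mat s - cmat F) (- cmat L) (cmat C) (0 :: complex^'q^'y)) < CARD('x + 'q)"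
proof (rule rank_less_ncols_if_kernel)
  show "vec_join (cvec v1 v2) (- cvec u1 u2) \<noteq> 0"
    using assms(5) by (simp add: zero_prod_def)
  have "blk (mat s - cmat F) (- cmat L) (cmat C) 0 *v vec_join (cvec v1 v2) (- cvec u1 u2)
    = vec_join (cvec (Re s *\<^sub>R v1 - Im s *\<^sub>R v2 - (F *v v1 - L *v u1))
                     (Im s *\<^sub>R v1 + Re s *\<^sub>R v2 - (F *v v2 - L *v u2)))
               (cvec (C *v v1) (C *v v2))"
    unfolding blk_mult_vec_join matrix_vector_mult_diff_rdistrib matrix_vector_mult_uminus
      cmat_mult_cvec mat_mult_cvec
    by (simp add: cvec_def vec_join_def vec_eq_iff complex_eq_iff split: sum.split)
  also have "\<dots> = 0" using assms(1-4) by simp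
  finally show "blk (mat s - cmat F) (- cmat L) (cmat C) 0 *v vec_join (cvec v1 v2) (- cvec u1 u2) = 0" .
qed

lemma rosenbrock_rank_less_if_not_inj_on_fst:
  fixes C :: "real^'x^'y" and F :: "real^'x^'x" and L :: "real^'q^'x"
    and Z :: "((real^'x) \<times> (real^'q)) set"
  assumes Z: "subspace Z" and not_inj: "\<not> inj_on fst Z"
    and output_nulling: "\<And>z. z \<in> Z \<Longrightarrow> C *v fst z = 0"
    and invariant: "\<And>z. z \<in> Z \<Longrightarrow> F *v fst z - L *v snd z \<in> fst ` Z"
  shows "rank (blk (mat s - cmat F) (- cmat L) (cmat C) (0 :: complex^'q^'y)) < CARD('x + 'q)"
proof -
  obtain z0 where z0: "z0 \<in> Z" "z0 \<noteq> 0" "fst z0 = 0"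
    using not_inj linear_inj_on_iff_eq_0[OF linear_fst Z] by blast
  define V where "V = fst ` Z"
  have V: "subspace V" unfolding V_def by (rule linear_subspace_image[OF linear_fst Z])
  have dim_less: "dim (V \<times> V) < dim (Z \<times> Z)"
    using dim_image_less_if_kernel[OF linear_fst Z z0] V Z by (simp add: V_def dim_Times)
  \<comment> \<open>real and imaginary parts of \<open>F v - L u = s v\<close> for \<open>v + i v'\<close> and \<open>u + i u'\<close> taken from \<open>Z\<close>\<close>
  define \<Xi> where "\<Xi> p =
    (F *v fst (fst p) - L *v snd (fst p) - (Re s *\<^sub>R fst (fst p) - Im s *\<^sub>R fst (snd p)),
     F *v fst (snd p) - L *v snd (snd p) - (Im s *\<^sub>R fst (fst p) + Re s *\<^sub>R fst (snd p)))"
    for p :: "((real^'x) \<times> (real^'q)) \<times> ((real^'x) \<times> (real^'q))"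
  have "linear \<Xi>"
    by (rule linearI)
      (auto simp: \<Xi>_def algebra_simps matrix_vector_right_distrib matrix_vector_mult_scaleR)
  moreover have "subspace (Z \<times> Z)" using Z Z by (rule subspace_Times)
  moreover have "\<Xi> (z1, z2) \<in> V \<times> V" if "z1 \<in> Z" "z2 \<in> Z" for z1 z2
  proof -
    have "fst z1 \<in> V" "fst z2 \<in> V" "F *v fst z1 - L *v snd z1 \<in> V" "F *v fst z2 - L *v snd z2 \<in> V"
      using that invariant by (auto simp: V_def)
    then show ?thesis
      using V by (simp add: \<Xi>_def subspace_diff subspace_add subspace_scale)
  qed
  then have "\<Xi> ` (Z \<times> Z) \<subseteq> V \<times> V" by blast
  ultimately obtain p where "p \<in> Z \<times> Z" "p \<noteq> 0" "\<Xi> p = 0"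
    using linear_kernel_nontrivial_if_dim_less dim_less by metis
  then show ?thesis
    by (intro rosenbrock_rank_less_if_real_kernel[where ?u1.0 = "snd (fst p)" and ?u2.0 = "snd (snd p)"])
      (auto simp: \<Xi>_def output_nulling prod_eq_iff)
qed

lemma left_invertible_inj_on_fst:
  fixes C :: "real^'x^'y" and F :: "real^'x^'x" and L :: "real^'q^'x"
    and Z :: "((real^'x) \<times> (real^'q)) set"
  assumes li: "left_invertible C F L" and Z: "subspace Z"
    and output_nulling: "\<And>z. z \<in> Z \<Longrightarrow> C *v fst z = 0"
    and invariant: "\<And>z. z \<in> Z \<Longrightarrow> F *v fst z - L *v snd z \<in> fst ` Z"
  shows "inj_on fst Z"
proof (rule ccontr)
  assume "\<not> inj_on fst Z"
  then have "normal_rank (\<lambda>s. blk (mat s - cmat F) (- cmat L) (cmat C) (0 :: complex^'q^'y))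
      < CARD('x + 'q)"
    using rosenbrock_rank_less_if_not_inj_on_fst[OF Z _ output_nulling invariant]
    by (intro normal_rank_less_if_rank_less) blast
  with li show False unfolding left_invertible_def by simp
qed

lemma trajectory_span_output_nulling_invariant:
  fixes C :: "real^'x^'y" and F :: "real^'x^'x" and L :: "real^'q^'x"
    and e :: "real \<Rightarrow> real^'x" and v :: "real \<Rightarrow> real^'q"
  assumes der: "\<And>t. t \<ge> 0 \<Longrightarrow> (e has_vector_derivative F *v e t - L *v v t) (at t within {0..})"
    and output_zero: "\<And>t. t \<ge> 0 \<Longrightarrow> C *v e t = 0"
  defines "Z \<equiv> span ((\<lambda>s. (e s, v s)) ` {0..})"
  shows "z \<in> Z \<Longrightarrow> C *v fst z = 0"
    and "z \<in> Z \<Longrightarrow> F *v fst z - L *v snd z \<in> fst ` Z"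
proof -
  show "C *v fst z = 0" if "z \<in> Z"
    using that unfolding Z_def
  proof (induction rule: span_induct)
    show "subspace {z :: (real^'x) \<times> (real^'q). C *v fst z = 0}"
      by (rule linear_subspace_kernel)
        (rule bounded_linear.linear[OF bounded_linear_compose[OF
            matrix_vector_mul_bounded_linear bounded_linear_fst]])
  qed (use output_zero in auto)
  have lin: "linear (\<lambda>z :: (real^'x) \<times> (real^'q). F *v fst z - L *v snd z)"
    by (rule linearI) (auto simp: algebra_simps matrix_vector_right_distrib matrix_vector_mult_scaleR)
  have "F *v fst z - L *v snd z \<in> span (e ` {0..})" if "z \<in> Z"
    using that unfolding Z_def
  proof (induction rule: span_induct)
    show "subspace {z :: (real^'x) \<times> (real^'q). F *v fst z - L *v snd z \<in> span (e ` {0..})}"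
      using linear_subspace_vimage[OF lin subspace_span] by (simp add: vimage_def)
  qed (use has_vector_derivative_in_span_image[OF _ der] in auto)
  moreover have "fst ` Z = span (e ` {0..})"
    unfolding Z_def span_linear_image[OF linear_fst, symmetric] by (simp add: image_image)
  ultimately show "F *v fst z - L *v snd z \<in> fst ` Z" if "z \<in> Z"
    using that by simp
qed

lemma left_invertible_unknown_input_vanishes:
  fixes C :: "real^'x^'y" and F :: "real^'x^'x" and L :: "real^'q^'x"
    and e :: "real \<Rightarrow> real^'x" and v :: "real \<Rightarrow> real^'q"
  assumes li: "left_invertible C F L"
    and der: "\<And>t. t \<ge> 0 \<Longrightarrow> (e has_vector_derivative F *v e t - L *v v t) (at t within {0..})"
    and output_zero: "\<And>t. t \<ge> 0 \<Longrightarrow> C *v e t = 0"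
    and e0: "e 0 = 0"
    and t: "t \<ge> 0"
  shows "v t = 0"
proof -
  define Z where "Z = span ((\<lambda>s. (e s, v s)) ` {0..})"
  have Z: "subspace Z" by (simp add: Z_def)
  have "inj_on fst Z"
    using left_invertible_inj_on_fst[OF li Z]
      trajectory_span_output_nulling_invariant[OF der output_zero, folded Z_def] by blast
  then obtain \<epsilon> where \<epsilon>: "\<epsilon> > 0" "\<And>z. z \<in> Z \<Longrightarrow> \<epsilon> * norm z \<le> norm (fst z)"
    using injective_imp_isometric[OF closed_subspace[OF Z] Z bounded_linear_fst]
      linear_inj_on_iff_eq_0[OF linear_fst Z] by metis
  have v_bound: "norm (v s) \<le> norm (e s) / \<epsilon>" if "s \<ge> 0" for s
  proof -
    have "\<epsilon> * norm (v s) \<le> \<epsilon> * norm (e s, v s)"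
      using \<epsilon>(1) norm_snd_le by (simp add: mult_left_mono)
    also have "\<dots> \<le> norm (e s)"
      using \<epsilon>(2)[of "(e s, v s)"] that unfolding Z_def by (auto intro: span_base)
    finally show ?thesis using \<epsilon>(1) by (simp add: field_simps)
  qed
  obtain K\<^sub>F where K\<^sub>F: "\<And>x. norm (F *v x) \<le> norm x * K\<^sub>F"
    using bounded_linear.bounded[OF matrix_vector_mul_bounded_linear] by blast
  obtain K\<^sub>L where K\<^sub>L: "K\<^sub>L > 0" "\<And>x. norm (L *v x) \<le> norm x * K\<^sub>L"
    using bounded_linear.pos_bounded[OF matrix_vector_mul_bounded_linear] by blast
  have "norm (F *v e s - L *v v s) \<le> (K\<^sub>F + K\<^sub>L / \<epsilon>) * norm (e s)" if "s \<ge> 0" for s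
  proof -
    have "norm (F *v e s - L *v v s) \<le> norm (e s) * K\<^sub>F + norm (v s) * K\<^sub>L"
      using norm_triangle_ineq4 K\<^sub>F K\<^sub>L(2) by (metis add_mono order_trans)
    also have "\<dots> \<le> norm (e s) * K\<^sub>F + (norm (e s) / \<epsilon>) * K\<^sub>L"
      using v_bound[OF that] K\<^sub>L(1) by (intro add_left_mono mult_right_mono) auto
    finally show ?thesis by (simp add: algebra_simps)
  qed
  then have "e s = 0" if "s \<ge> 0" for s
    using gronwall_vanishing[OF der _ e0 that] by blast
  then show ?thesis using v_bound[OF t] t by simp
qed

section \<open>The attack detection filters\<close>

definition estimation_error ::
  "real^'x^'y \<Rightarrow> real^'y^'x \<Rightarrow> (real \<Rightarrow> real^'x) \<Rightarrow> (real \<Rightarrow> real^'x) \<Rightarrow> real \<Rightarrow> real^'x" where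
  "estimation_error C H x z t = x t - (z t + H *v (C *v x t))"

lemma residual_eq_estimation_error: "residual C H x z t = C *v estimation_error C H x z t"
  by (simp add: residual_def estimation_error_def matrix_vector_mult_diff_distrib)

context
  fixes A :: "real^'x^'x" and B :: "real^'u^'x" and Ba :: "real^'m^'x"
    and F1 :: "real^'f^'x" and F2 :: "real^'g^'x" and N :: "real^'w^'x"
    and C :: "real^'x^'y" and Da :: "real^'a^'y" and Dac :: "real^'r^'q"
    and Fp :: "real^'q^'q" and Tp :: "real^'x^'q" and Kp :: "real^'y^'q" and Lp :: "real^'q^'q"
    and F :: "real^'x^'x" and T :: "real^'x^'x" and K K1 K2 H :: "real^'y^'x"
    and L :: "real^'q^'x"
  assumes F_def: "F = A - H ** C ** A - K1 ** C"
    and K2_def: "K2 = F ** H"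
    and K_def: "K = K1 + K2"
    and c1: "T = mat 1 - H ** C"
    and c2: "(mat 1 - H ** C) ** F1 = 0"
    and c3: "(mat 1 - H ** C) ** F2 = 0"
    and c4: "L ** Dac = 0"
    and c5: "Lp ** Dac = 0"
    and c6: "Kp ** Da = 0"
begin

lemma estimation_error_has_vector_derivative:
  assumes traj: "cps_traj A B Ba F1 F2 N C Da Dac Fp Tp Kp Lp F T K L x u ustar au f1 f2 w ay ac zc zp z"
    and t: "t \<ge> 0"
  shows "(estimation_error C H x z has_vector_derivative
      F *v estimation_error C H x z t - L *v (zp t - zc t) + (mat 1 - H ** C) *v (N *v w t))
    (at t within {0..})"
proof -
  let ?x' = "A *v x t + B *v u t + Ba *v au t + F1 *v f1 t + F2 *v f2 t + N *v w t"
  let ?z' = "F *v z t + T *v (B *v ustar t) + K *v (C *v x t) + L *v (zp t - (zc t + Dac *v ac t))"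
  have x': "(x has_vector_derivative ?x') (at t within {0..})"
    and z': "(z has_vector_derivative ?z') (at t within {0..})"
    and ustar: "B *v ustar t = B *v u t + Ba *v au t"
    using traj t unfolding cps_traj_def by auto
  have "(estimation_error C H x z has_vector_derivative ?x' - (?z' + H *v (C *v ?x'))) (at t within {0..})"
    unfolding estimation_error_def
    by (intro has_vector_derivative_diff has_vector_derivative_add x' z'
        bounded_linear.has_vector_derivative[OF matrix_vector_mul_bounded_linear])
  moreover
  \<comment> \<open>conditions 1)--4) remove \<open>f\<^sub>1\<close>, \<open>f\<^sub>2\<close>, \<open>a\<^sub>c\<close> and, through \<open>T = I - H C\<close>, also \<open>u\<close> and \<open>a\<^sub>u\<close>\<close>
  have "F1 *v f1 t - H *v (C *v (F1 *v f1 t)) = 0" "F2 *v f2 t - H *v (C *v (F2 *v f2 t)) = 0"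
    using arg_cong[OF c2, of "\<lambda>M. M *v f1 t"] arg_cong[OF c3, of "\<lambda>M. M *v f2 t"]
    by (simp_all add: matrix_vector_mult_diff_rdistrib matrix_vector_mul_assoc[symmetric])
  moreover have "L *v (Dac *v ac t) = 0"
    using arg_cong[OF c4, of "\<lambda>M. M *v ac t"] by (simp add: matrix_vector_mul_assoc)
  ultimately show ?thesis
    unfolding ustar c1 K_def K2_def estimation_error_def
    by (elim has_vector_derivative_eq_rhs)
      (simp add: F_def algebra_simps matrix_vector_mul_assoc[symmetric] matrix_vector_mult_diff_rdistrib
        matrix_vector_mult_add_rdistrib)
qed

lemma filter_discrepancy_has_vector_derivative:
  assumes traj: "cps_traj A B Ba F1 F2 N C Da Dac Fp Tp Kp Lp F T K L x u ustar au f1 f2 w ay ac zc zp z"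
    and t: "t \<ge> 0"
  shows "((\<lambda>s. zp s - zc s) has_vector_derivative (Fp + Lp) *v (zp t - zc t) + Tp *v (Ba *v au t))
    (at t within {0..})"
proof -
  let ?zc' = "Fp *v zc t + Tp *v (B *v u t) + Kp *v (C *v x t + Da *v ay t)"
  let ?zp' = "Fp *v zp t + Tp *v (B *v ustar t) + Kp *v (C *v x t) + Lp *v (zp t - (zc t + Dac *v ac t))"
  have "(zc has_vector_derivative ?zc') (at t within {0..})"
    and "(zp has_vector_derivative ?zp') (at t within {0..})"
    and ustar: "B *v ustar t = B *v u t + Ba *v au t"
    using traj t unfolding cps_traj_def by auto
  then have "((\<lambda>s. zp s - zc s) has_vector_derivative ?zp' - ?zc') (at t within {0..})"
    by (intro has_vector_derivative_diff)
  moreover have "Lp *v (Dac *v ac t) = 0" "Kp *v (Da *v ay t) = 0"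
    using arg_cong[OF c5, of "\<lambda>M. M *v ac t"] arg_cong[OF c6, of "\<lambda>M. M *v ay t"]
    by (simp_all add: matrix_vector_mul_assoc)
  ultimately show ?thesis
    unfolding ustar
    by (elim has_vector_derivative_eq_rhs)
      (simp add: algebra_simps matrix_vector_mult_add_rdistrib)
qed

lemma residual_independent_of_faults_and_sensor_attack:
  assumes traj: "cps_traj A B Ba F1 F2 N C Da Dac Fp Tp Kp Lp F T K L x u ustar au f1 f2 w ay ac zc zp z"
    and traj': "cps_traj A B Ba F1 F2 N C Da Dac Fp Tp Kp Lp F T K L x' u ustar' au f1' f2' w ay' ac zc' zp' z'"
    and init: "x' 0 = x 0" "zc' 0 = zc 0" "zp' 0 = zp 0" "z' 0 = z 0"
    and t: "t \<ge> 0"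
  shows "residual C H x' z' t = residual C H x z t"
proof -
  define d where "d s =
    (estimation_error C H x' z' s - estimation_error C H x z s, (zp' s - zc' s) - (zp s - zc s))" for s
  define M where "M p = (F *v fst p - L *v snd p, (Fp + Lp) *v snd p)" for p :: "(real^'x) \<times> (real^'q)"
  have "linear M"
    by (rule linearI) (auto simp: M_def algebra_simps matrix_vector_right_distrib matrix_vector_mult_scaleR)
  then obtain K\<^sub>M where K\<^sub>M: "\<And>p. norm (M p) \<le> K\<^sub>M * norm p"
    using bounded_linear.bounded[of M] linear_conv_bounded_linear by (metis mult.commute)
  have "(d has_vector_derivative M (d s)) (at s within {0..})" if "s \<ge> 0" for s
    unfolding d_def
    by (rule has_vector_derivative_eq_rhs[OF has_vector_derivative_Pair[OF
          has_vector_derivative_diff[OF estimation_error_has_vector_derivative[OF traj' that]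
                                        estimation_error_has_vector_derivative[OF traj that]]
          has_vector_derivative_diff[OF filter_discrepancy_has_vector_derivative[OF traj' that]
                                        filter_discrepancy_has_vector_derivative[OF traj that]]]])
      (simp add: M_def algebra_simps matrix_vector_right_distrib matrix_vector_mult_diff_distrib)
  moreover have "d 0 = 0" using init by (simp add: d_def estimation_error_def zero_prod_def)
  ultimately have "d t = 0" using gronwall_vanishing[OF _ K\<^sub>M _ t] by blast
  then show ?thesis by (simp add: d_def residual_eq_estimation_error zero_prod_def)
qed

lemma stealthy_actuator_attack_in_kernel:
  assumes li: "left_invertible C F L"
    and traj: "cps_traj A B Ba F1 F2 N C Da Dac Fp Tp Kp Lp F T K L x u ustar au f1 f2 w ay ac zc zp z"
    and init: "x 0 = z 0 + H *v (C *v x 0)" "zp 0 = zc 0"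
    and noise_free: "\<And>t. t \<ge> 0 \<Longrightarrow> w t = 0"
    and stealthy: "\<And>t. t \<ge> 0 \<Longrightarrow> residual C H x z t = 0"
    and t: "t \<ge> 0"
  shows "Tp *v (Ba *v au t) = 0"
proof -
  have discrepancy_zero: "zp s - zc s = 0" if "s \<ge> 0" for s
  proof (rule left_invertible_unknown_input_vanishes[OF li _ _ _ that])
    show "(estimation_error C H x z has_vector_derivative
        F *v estimation_error C H x z r - L *v (zp r - zc r)) (at r within {0..})" if "r \<ge> 0" for r
      using estimation_error_has_vector_derivative[OF traj that] noise_free[OF that] by simp
    show "C *v estimation_error C H x z r = 0" if "r \<ge> 0" for r
      using stealthy[OF that] by (simp add: residual_eq_estimation_error)
    show "estimation_error C H x z 0 = 0" using init by (simp add: estimation_error_def)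
  qed
  have "(Fp + Lp) *v (zp t - zc t) + Tp *v (Ba *v au t) = 0"
    using has_vector_derivative_eq_0_if_vanishing[OF t discrepancy_zero
        filter_discrepancy_has_vector_derivative[OF traj t]] .
  with discrepancy_zero[OF t] show ?thesis by simp
qed

end

theorem proposition1:
  fixes A :: "real^'x^'x" and B :: "real^'u^'x" and Ba :: "real^'m^'x"
    and F1 :: "real^'f^'x" and F2 :: "real^'g^'x" and N :: "real^'w^'x"
    and C :: "real^'x^'y" and Da :: "real^'a^'y" and Dac :: "real^'r^'q"
    and Fp :: "real^'q^'q" and Tp :: "real^'x^'q" and Kp :: "real^'y^'q" and Lp :: "real^'q^'q"
    and F :: "real^'x^'x" and T :: "real^'x^'x" and K K1 K2 H :: "real^'y^'x"
    and L :: "real^'q^'x"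
  assumes rank_Dac: "rank Dac < CARD('q)"
    and F_def: "F = A - H ** C ** A - K1 ** C"
    and K2_def: "K2 = F ** H"
    and K_def: "K = K1 + K2"
    and c1: "T = mat 1 - H ** C"
    and c2: "(mat 1 - H ** C) ** F1 = 0"
    and c3: "(mat 1 - H ** C) ** F2 = 0"
    and c4: "L ** Dac = 0"
    and c5: "Lp ** Dac = 0"
    and c6: "Kp ** Da = 0"
    and c7: "left_invertible C F L"
    and c8: "minimum_phase (\<lambda>s. blk (mat s - cmat (Fp + Lp)) (- cmat (Tp ** Ba))
                                    (cmat L) (0 :: complex^'m^'x))"
    and c9: "rank (L ** Tp ** Ba) = rank (Tp ** Ba)"
    and c10: "hurwitz (blk F (- L) (0 :: real^'x^'q) (Fp + Lp))"
  shows
    \<comment> \<open>decoupling: the residual trajectory does not depend on a_y, f_1, f_2\<close>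
    "(\<forall>x u ustar au f1 f2 w ay ac zc zp z x' ustar' f1' f2' ay' zc' zp' z'.
        cps_traj A B Ba F1 F2 N C Da Dac Fp Tp Kp Lp F T K L x u ustar au f1 f2 w ay ac zc zp z
      \<and> cps_traj A B Ba F1 F2 N C Da Dac Fp Tp Kp Lp F T K L x' u ustar' au f1' f2' w ay' ac zc' zp' z'
      \<and> x' 0 = x 0 \<and> zc' 0 = zc 0 \<and> zp' 0 = zp 0 \<and> z' 0 = z 0
      \<longrightarrow> (\<forall>t\<ge>0. residual C H x' z' t = residual C H x z t))
    \<and>
    \<comment> \<open>sensitivity to a_u: an actuator attack that leaves the residual identically zero
        (zero initial estimation errors, no noise) cannot excite the filter discrepancy\<close>
    (\<forall>x u ustar au f1 f2 w ay ac zc zp z.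
        cps_traj A B Ba F1 F2 N C Da Dac Fp Tp Kp Lp F T K L x u ustar au f1 f2 w ay ac zc zp z
      \<and> x 0 = z 0 + H *v (C *v x 0) \<and> zp 0 = zc 0
      \<and> (\<forall>t\<ge>0. w t = 0)
      \<and> (\<forall>t\<ge>0. residual C H x z t = 0)
      \<longrightarrow> (\<forall>t\<ge>0. Tp *v (Ba *v au t) = 0))"
  by (intro conjI allI impI; elim conjE)
    (blast intro: residual_independent_of_faults_and_sensor_attack[OF F_def K2_def K_def c1 c2 c3 c4 c5 c6]
      stealthy_actuator_attack_in_kernel[OF F_def K2_def K_def c1 c2 c3 c4 c5 c6 c7])+

end
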